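(* Let $\rho$ be a critical radius function on $\mathbb{R}^n$ and $0\le\tilde\delta\le\delta<1$. Then for every $f\in L^1_{loc}(\mathbb{R}^n)$ and every $x\in\mathbb{R}^n$, $$f^{\sharp,\rho}_{\tilde\delta}(x)\le2\,M^{\rho,loc}_{\delta-\tilde\delta}\big(f^{\sharp,\rho}_\delta\big)(x).$$
   Context: A critical radius function is $\rho:\mathbb{R}^n\to(0,\infty)$ with constants $c_\rho,N_\rho\ge1$ such that $c_\rho^{-1}\rho(x)\big(1+\frac{|x-y|}{\rho(x)}\big)^{-N_\rho}\le\rho(y)\le c_\rho\rho(x)\big(1+\frac{|x-y|}{\rho(x)}\big)^{N_\rho/(N_\rho+1)}$ for all $x,y$. $\mathcal{B}_\rho$ is the family of balls $B(x,r)$ with $0<r\le\rho(x)$. For $0\le\delta<1$ and $f\in L^1_{loc}$: $f^{\sharp,\rho}_\delta(x)=\sup_{B\in\mathcal{B}_\rho}\frac{\chi_B(x)}{|B|^{1+\delta/n}}\int_B|f-f_B|+\sup_{B=B(z,\rho(z)),\,z\in\mathbb{R}^n}\frac{\chi_B(x)}{|B|^{1+\delta/n}}\int_B|f|$ ($f_B$ the average of $f$ on $B$), and $M^{\rho,loc}_\delta f(x)=\sup_{B\in\mathcal{B}_\rho}\frac{\chi_B(x)}{|B|^{1-\delta/n}}\int_B|f|$. *)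

theory Defs
  imports "HOL-Analysis.Analysis"
begin

definition critical_radius :: "('a::euclidean_space \<Rightarrow> real) \<Rightarrow> bool" where
  "critical_radius \<rho> \<longleftrightarrow> (\<forall>x. 0 < \<rho> x) \<and>
     (\<exists>c N::real. 1 \<le> c \<and> 1 \<le> N \<and>
       (\<forall>x y. (1 / c) * \<rho> x * (1 + dist x y / \<rho> x) powr (- N) \<le> \<rho> y \<and>
              \<rho> y \<le> c * \<rho> x * (1 + dist x y / \<rho> x) powr (N / (N + 1))))"

definition locally_integrable :: "('a::euclidean_space \<Rightarrow> real) \<Rightarrow> bool" where
  "locally_integrable f \<longleftrightarrow> (\<forall>K. compact K \<longrightarrow> set_integrable lebesgue K f)"

definition avg :: "('a::euclidean_space \<Rightarrow> real) \<Rightarrow> 'a set \<Rightarrow> real" where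
  "avg f B = (set_lebesgue_integral lebesgue B f) / measure lebesgue B"

definition sharp_rho :: "('a::euclidean_space \<Rightarrow> real) \<Rightarrow> real \<Rightarrow> ('a \<Rightarrow> real) \<Rightarrow> 'a \<Rightarrow> ennreal" where
  "sharp_rho \<rho> \<delta> f x =
     (SUP zr \<in> {(z, r). 0 < r \<and> r \<le> \<rho> z}.
        indicator (ball (fst zr) (snd zr)) x
        * ennreal (1 / measure lebesgue (ball (fst zr) (snd zr)) powr (1 + \<delta> / real DIM('a)))
        * set_nn_integral lebesgue (ball (fst zr) (snd zr))
            (\<lambda>y. ennreal \<bar>f y - avg f (ball (fst zr) (snd zr))\<bar>))
   + (SUP z. indicator (ball z (\<rho> z)) x
        * ennreal (1 / measure lebesgue (ball z (\<rho> z)) powr (1 + \<delta> / real DIM('a)))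
        * set_nn_integral lebesgue (ball z (\<rho> z)) (\<lambda>y. ennreal \<bar>f y\<bar>))"

definition max_rho_loc :: "('a::euclidean_space \<Rightarrow> real) \<Rightarrow> real \<Rightarrow> ('a \<Rightarrow> ennreal) \<Rightarrow> 'a \<Rightarrow> ennreal" where
  "max_rho_loc \<rho> \<delta> g x =
     (SUP zr \<in> {(z, r). 0 < r \<and> r \<le> \<rho> z}.
        indicator (ball (fst zr) (snd zr)) x
        * ennreal (1 / measure lebesgue (ball (fst zr) (snd zr)) powr (1 - \<delta> / real DIM('a)))
        * set_nn_integral lebesgue (ball (fst zr) (snd zr)) g)"

end

theory Submission
  imports Defs
begin

text \<open>Let \<open>B \<in> \<B>\<^sub>\<rho>\<close> contain \<open>x\<close>, \<open>n = DIM('a)\<close>, and let \<open>T\<close> be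
  \<open>|B|\<^bsup>-1-\<delta>/n\<^esup> \<integral>\<^sub>B |f - f\<^sub>B|\<close> or, if \<open>B = B(z, \<rho> z)\<close>, \<open>|B|\<^bsup>-1-\<delta>/n\<^esup> \<integral>\<^sub>B |f|\<close>. Every
  \<open>y \<in> B\<close> sees \<open>B\<close> in the supremum defining \<open>f\<^sup>\<sharp>\<^sub>\<delta>(y)\<close>, so \<open>T \<le> f\<^sup>\<sharp>\<^sub>\<delta>\<close> on all of \<open>B\<close>;
  integrating over \<open>B\<close> with weight \<open>|B|\<^bsup>-(1-(\<delta>-\<delta>')/n)\<^esup>\<close> gives
  \<open>|B|\<^bsup>(\<delta>-\<delta>')/n\<^esup> T \<le> M\<^sub>\<delta>\<^sub>-\<^sub>\<delta>\<^sub>'(f\<^sup>\<sharp>\<^sub>\<delta>)(x)\<close>, and the left side is the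
  corresponding term of \<open>f\<^sup>\<sharp>\<^sub>\<delta>\<^sub>'(x)\<close>. The two suprema making up \<open>f\<^sup>\<sharp>\<^sub>\<delta>\<^sub>'\<close> give the
  factor 2.\<close>

lemma measure_lebesgue_ball_pos:
  fixes z :: "'a::euclidean_space"
  assumes "0 < r"
  shows "0 < measure lebesgue (ball z r)"
  using content_ball_pos[OF assms] by simp

lemma emeasure_lebesgue_ball:
  fixes z :: "'a::euclidean_space"
  shows "emeasure lebesgue (ball z r) = ennreal (measure lebesgue (ball z r))"
  using emeasure_lborel_ball_finite[of z r] by (simp add: emeasure_eq_ennreal_measure)

lemma max_rho_loc_ge_lower_bound:
  fixes \<rho> :: "'a::euclidean_space \<Rightarrow> real" and g :: "'a \<Rightarrow> ennreal"
  assumes r: "0 < r" "r \<le> \<rho> z" and x: "x \<in> ball z r"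
    and lower: "\<And>y. y \<in> ball z r \<Longrightarrow> c \<le> g y"
  shows "ennreal (measure lebesgue (ball z r) powr (\<delta> / real DIM('a))) * c
           \<le> max_rho_loc \<rho> \<delta> g x"
proof -
  define m where "m = measure lebesgue (ball z r)"
  define w where "w = 1 / m powr (1 - \<delta> / real DIM('a))"
  have "0 < m" unfolding m_def using measure_lebesgue_ball_pos[OF r(1)] .
  then have weight: "m powr (\<delta> / real DIM('a)) = w * m"
    by (simp add: w_def powr_diff)
  have "c * ennreal m = (\<integral>\<^sup>+ y. c * indicator (ball z r) y \<partial>lebesgue)"
    by (simp add: nn_integral_cmult_indicator emeasure_lebesgue_ball m_def)
  also have "\<dots> \<le> set_nn_integral lebesgue (ball z r) g"
    by (rule nn_integral_mono) (auto simp: indicator_def mult.commute intro: lower)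
  finally have integral: "c * ennreal m \<le> set_nn_integral lebesgue (ball z r) g" .
  have "0 \<le> w" by (simp add: w_def)
  have "ennreal (m powr (\<delta> / real DIM('a))) * c = ennreal w * (c * ennreal m)"
    using \<open>0 \<le> w\<close> \<open>0 < m\<close> by (simp only: weight ennreal_mult mult_ac less_imp_le)
  also have "\<dots> \<le> ennreal w * set_nn_integral lebesgue (ball z r) g"
    by (rule mult_left_mono[OF integral]) simp
  also have "\<dots> = indicator (ball (fst (z, r)) (snd (z, r))) x
      * ennreal (1 / measure lebesgue (ball (fst (z, r)) (snd (z, r)))
                   powr (1 - \<delta> / real DIM('a)))
      * set_nn_integral lebesgue (ball (fst (z, r)) (snd (z, r))) g"
    using x by (simp add: w_def m_def)
  also have "\<dots> \<le> max_rho_loc \<rho> \<delta> g x"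
    unfolding max_rho_loc_def by (rule SUP_upper) (use r in auto)
  finally show ?thesis by (simp add: m_def)
qed

lemma max_rho_loc_ge_rescaled:
  fixes \<rho> :: "'a::euclidean_space \<Rightarrow> real" and g :: "'a \<Rightarrow> ennreal"
  assumes r: "0 < r" "r \<le> \<rho> z" and x: "x \<in> ball z r"
    and lower: "\<And>y. y \<in> ball z r \<Longrightarrow>
       ennreal (1 / measure lebesgue (ball z r) powr (1 + \<delta> / real DIM('a))) * I \<le> g y"
  shows "ennreal (1 / measure lebesgue (ball z r) powr (1 + \<delta>' / real DIM('a))) * I
           \<le> max_rho_loc \<rho> (\<delta> - \<delta>') g x"
proof -
  define m where "m = measure lebesgue (ball z r)"
  define n where "n = real DIM('a)"
  have "0 < m" unfolding m_def using measure_lebesgue_ball_pos[OF r(1)] .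
  have "(\<delta> - \<delta>') / n + - (1 + \<delta> / n) = - (1 + \<delta>' / n)"
    by (simp add: diff_divide_distrib)
  then have "m powr ((\<delta> - \<delta>') / n) * (1 / m powr (1 + \<delta> / n)) = 1 / m powr (1 + \<delta>' / n)"
    by (simp only: powr_minus_divide[symmetric] powr_add[symmetric])
  then have "ennreal (1 / m powr (1 + \<delta>' / n)) * I
      = ennreal (m powr ((\<delta> - \<delta>') / n)) * (ennreal (1 / m powr (1 + \<delta> / n)) * I)"
    using \<open>0 < m\<close> by (simp add: ennreal_mult[symmetric] mult.assoc[symmetric])
  also have "\<dots> \<le> max_rho_loc \<rho> (\<delta> - \<delta>') g x"
    unfolding m_def n_def using r x lower by (rule max_rho_loc_ge_lower_bound)
  finally show ?thesis by (simp add: m_def n_def)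
qed

lemma sharp_rho_ge_oscillation:
  fixes \<rho> :: "'a::euclidean_space \<Rightarrow> real"
  assumes "0 < r" "r \<le> \<rho> z" "y \<in> ball z r"
  shows "ennreal (1 / measure lebesgue (ball z r) powr (1 + \<delta> / real DIM('a)))
           * set_nn_integral lebesgue (ball z r) (\<lambda>u. ennreal \<bar>f u - avg f (ball z r)\<bar>)
         \<le> sharp_rho \<rho> \<delta> f y"
proof -
  have "ennreal (1 / measure lebesgue (ball z r) powr (1 + \<delta> / real DIM('a)))
           * set_nn_integral lebesgue (ball z r) (\<lambda>u. ennreal \<bar>f u - avg f (ball z r)\<bar>)
      \<le> (SUP zr \<in> {(z, r). 0 < r \<and> r \<le> \<rho> z}.
          indicator (ball (fst zr) (snd zr)) y
          * ennreal (1 / measure lebesgue (ball (fst zr) (snd zr)) powr (1 + \<delta> / real DIM('a)))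
          * set_nn_integral lebesgue (ball (fst zr) (snd zr))
              (\<lambda>u. ennreal \<bar>f u - avg f (ball (fst zr) (snd zr))\<bar>))"
    by (rule SUP_upper2[of "(z, r)"]) (use assms in auto)
  also have "\<dots> \<le> sharp_rho \<rho> \<delta> f y"
    unfolding sharp_rho_def by (rule add_increasing2) auto
  finally show ?thesis .
qed

lemma sharp_rho_ge_critical_ball:
  fixes \<rho> :: "'a::euclidean_space \<Rightarrow> real"
  assumes "y \<in> ball z (\<rho> z)"
  shows "ennreal (1 / measure lebesgue (ball z (\<rho> z)) powr (1 + \<delta> / real DIM('a)))
           * set_nn_integral lebesgue (ball z (\<rho> z)) (\<lambda>u. ennreal \<bar>f u\<bar>)
         \<le> sharp_rho \<rho> \<delta> f y"
proof -
  have "ennreal (1 / measure lebesgue (ball z (\<rho> z)) powr (1 + \<delta> / real DIM('a)))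
           * set_nn_integral lebesgue (ball z (\<rho> z)) (\<lambda>u. ennreal \<bar>f u\<bar>)
      \<le> (SUP z. indicator (ball z (\<rho> z)) y
          * ennreal (1 / measure lebesgue (ball z (\<rho> z)) powr (1 + \<delta> / real DIM('a)))
          * set_nn_integral lebesgue (ball z (\<rho> z)) (\<lambda>u. ennreal \<bar>f u\<bar>))"
    by (rule SUP_upper2[of z]) (use assms in auto)
  also have "\<dots> \<le> sharp_rho \<rho> \<delta> f y"
    unfolding sharp_rho_def by (rule add_increasing) auto
  finally show ?thesis .
qed

lemma sharp_rho_le_add:
  fixes \<rho> :: "'a::euclidean_space \<Rightarrow> real"
  assumes oscillation: "\<And>z r. 0 < r \<Longrightarrow> r \<le> \<rho> z \<Longrightarrow> x \<in> ball z r \<Longrightarrow>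
      ennreal (1 / measure lebesgue (ball z r) powr (1 + \<delta> / real DIM('a)))
        * set_nn_integral lebesgue (ball z r) (\<lambda>u. ennreal \<bar>f u - avg f (ball z r)\<bar>) \<le> A"
    and critical: "\<And>z. x \<in> ball z (\<rho> z) \<Longrightarrow>
      ennreal (1 / measure lebesgue (ball z (\<rho> z)) powr (1 + \<delta> / real DIM('a)))
        * set_nn_integral lebesgue (ball z (\<rho> z)) (\<lambda>u. ennreal \<bar>f u\<bar>) \<le> B"
  shows "sharp_rho \<rho> \<delta> f x \<le> A + B"
  unfolding sharp_rho_def
proof (rule add_mono)
  show "(SUP zr \<in> {(z, r). 0 < r \<and> r \<le> \<rho> z}.
          indicator (ball (fst zr) (snd zr)) x
          * ennreal (1 / measure lebesgue (ball (fst zr) (snd zr)) powr (1 + \<delta> / real DIM('a)))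
          * set_nn_integral lebesgue (ball (fst zr) (snd zr))
              (\<lambda>u. ennreal \<bar>f u - avg f (ball (fst zr) (snd zr))\<bar>)) \<le> A"
    using oscillation by (intro SUP_least) (auto split: split_indicator)
  show "(SUP z. indicator (ball z (\<rho> z)) x
          * ennreal (1 / measure lebesgue (ball z (\<rho> z)) powr (1 + \<delta> / real DIM('a)))
          * set_nn_integral lebesgue (ball z (\<rho> z)) (\<lambda>u. ennreal \<bar>f u\<bar>)) \<le> B"
    using critical by (intro SUP_least) (auto split: split_indicator)
qed

theorem lemma4:
  fixes \<rho> :: "'a::euclidean_space \<Rightarrow> real" and f :: "'a \<Rightarrow> real"
    and \<delta> \<delta>' :: real and x :: 'a
  assumes "critical_radius \<rho>"
    and "0 \<le> \<delta>'" and "\<delta>' \<le> \<delta>" and "\<delta> < 1"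
    and "locally_integrable f"
  shows "sharp_rho \<rho> \<delta>' f x \<le> 2 * max_rho_loc \<rho> (\<delta> - \<delta>') (sharp_rho \<rho> \<delta> f) x"
proof -
  have \<rho>_pos: "0 < \<rho> z" for z
    using assms(1) unfolding critical_radius_def by blast
  let ?M = "max_rho_loc \<rho> (\<delta> - \<delta>') (sharp_rho \<rho> \<delta> f) x"
  have "sharp_rho \<rho> \<delta>' f x \<le> ?M + ?M"
  proof (rule sharp_rho_le_add)
    fix z r assume "0 < r" "r \<le> \<rho> z" "x \<in> ball z r"
    then show "ennreal (1 / measure lebesgue (ball z r) powr (1 + \<delta>' / real DIM('a)))
        * set_nn_integral lebesgue (ball z r) (\<lambda>u. ennreal \<bar>f u - avg f (ball z r)\<bar>) \<le> ?M"
      by (intro max_rho_loc_ge_rescaled sharp_rho_ge_oscillation)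
  next
    fix z assume "x \<in> ball z (\<rho> z)"
    then show "ennreal (1 / measure lebesgue (ball z (\<rho> z)) powr (1 + \<delta>' / real DIM('a)))
        * set_nn_integral lebesgue (ball z (\<rho> z)) (\<lambda>u. ennreal \<bar>f u\<bar>) \<le> ?M"
      by (intro max_rho_loc_ge_rescaled sharp_rho_ge_critical_ball \<rho>_pos order_refl)
  qed
  then show ?thesis by (simp add: mult_2)
qed

end
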